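(* (a) Let $(F[n])_{n\in\mathbb N_0}$ with coface operators $F(\delta^k)\colon F[n-1]\to F[n]$ ($k=0,\dots,n$, $n\in\mathbb N$) be an SCO in a category $\mathcal C$. Consider the filtration $F[0]\xrightarrow{i_1}F[1]\xrightarrow{i_2}\cdots$ with $i_n:=F(\delta^n)$, and suppose it has an $\omega$-colimit $F_\infty$ with canonical morphisms $\mu_n\colon F[n]\to F_\infty$. For $n\in\mathbb N$, $k\in\mathbb N_0$ set $\alpha_k^{(n)}:=F(\delta^k)\colon F[n-1]\to F[n]$ if $k\le n$ and $\alpha_k^{(n)}:=F(\delta^n)$ if $k>n$. Then for each $k$ the family $(\alpha_k^{(n)})_{n\in\mathbb N}$ determines an adapted endomorphism $\alpha_k$ of $F_\infty$ (i.e. $\mu_{n+1}\alpha_k^{(n+1)}i_n=\mu_n\alpha_k^{(n)}$ for all $n$, and $\alpha_k$ is the unique morphism with $\alpha_k\mu_{n-1}=\mu_n\alpha_k^{(n)}$ for all $n$), and $(\alpha_k)_{k\in\mathbb N_0}$ is an SCO-system of partial shifts for this filtration (called the SCO-system canonically associated to the SCO). (b) Conversely, let $(\alpha_k)_{k\in\mathbb N_0}$ be an SCO-system of partial shifts for a filtration $(F_n,i_n)$ with $\omega$-colimit $F_\infty$ whose canonical morphisms $\mu_n\colon F_n\to F_\infty$ are all monic, with $\alpha_k$ determined by $(\alpha_k^{(n)})_{n\in\mathbb N}$. Then $F[n]:=F_n$ together with $F(\delta^k):=\alpha_k^{(n)}\colon F[n-1]\to F[n]$ for $k=0,\dots,n$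 is an SCO in $\mathcal C$, and $(\alpha_k)_{k\in\mathbb N_0}$ is the SCO-system of partial shifts canonically associated (as in (a)) to this SCO.
   Context: A semi-cosimplicial object (SCO) in a category $\mathcal C$ is a sequence $(F^n)_{n\in\mathbb N_0}$ of objects with morphisms (coface operators) $\delta^k\colon F^{n-1}\to F^n$ ($k=0,\dots,n$, $n\in\mathbb N$) satisfying the cosimplicial identities $\delta^j\delta^i=\delta^i\delta^{j-1}$ whenever $i<j$. A filtration is a sequence of objects $F_n$ ($n\in\mathbb N_0$) with morphisms $i_n\colon F_{n-1}\to F_n$; its $\omega$-colimit is $F_\infty$ with $\mu_n\colon F_n\to F_\infty$, $\mu_ni_n=\mu_{n-1}$, universal among such cones. A morphism $\alpha\colon F_\infty\to F_\infty$ is an adapted endomorphism determined by $\alpha^{(n)}\colon F_{n-1}\to F_n$ ($n\in\mathbb N$) if $\mu_{n+1}\alpha^{(n+1)}i_n=\mu_n\alpha^{(n)}$ and $\alpha\mu_{n-1}=\mu_n\alpha^{(n)}$ for all $n$. A sequence $(\alpha_k)_{k\in\mathbb N_0}$ of adapted endomorphisms for a common filtration is an SCO-system of partial shifts if (1) $\alpha_k\mu_{k-1}=\mu_{k-1}$ for each $k\in\mathbb N$, and (2) $\alpha_j\alpha_i=\alpha_i\alpha_{j-1}$ for all $i<j$ in $\mathbb N_0$. *)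

theory Defs
  imports Main
begin

text \<open>A (small) category given explicitly: objects, arrows, domain, codomain,
  composition (cmp C g f = g o f) and identities.\<close>

record ('o,'m) cat =
  Obj :: "'o set"
  Arr :: "'m set"
  cdom :: "'m \<Rightarrow> 'o"
  ccod :: "'m \<Rightarrow> 'o"
  cmp :: "'m \<Rightarrow> 'm \<Rightarrow> 'm"
  cid :: "'o \<Rightarrow> 'm"

definition Hom :: "('o,'m) cat \<Rightarrow> 'o \<Rightarrow> 'o \<Rightarrow> 'm set" where
  "Hom C a b = {f \<in> Arr C. cdom C f = a \<and> ccod C f = b}"

definition category :: "('o,'m) cat \<Rightarrow> bool" where
  "category C \<longleftrightarrow>
     (\<forall>f \<in> Arr C. cdom C f \<in> Obj C \<and> ccod C f \<in> Obj C)
   \<and> (\<forall>a \<in> Obj C. cid C a \<in> Hom C a a)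
   \<and> (\<forall>a b c f g. f \<in> Hom C a b \<longrightarrow> g \<in> Hom C b c \<longrightarrow> cmp C g f \<in> Hom C a c)
   \<and> (\<forall>f \<in> Arr C. cmp C (cid C (ccod C f)) f = f \<and> cmp C f (cid C (cdom C f)) = f)
   \<and> (\<forall>a b c d f g h. f \<in> Hom C a b \<longrightarrow> g \<in> Hom C b c \<longrightarrow> h \<in> Hom C c d \<longrightarrow>
        cmp C h (cmp C g f) = cmp C (cmp C h g) f)"

definition monic :: "('o,'m) cat \<Rightarrow> 'm \<Rightarrow> bool" where
  "monic C f \<longleftrightarrow> f \<in> Arr C \<and>
     (\<forall>g h. g \<in> Arr C \<longrightarrow> h \<in> Arr C \<longrightarrow> cdom C g = cdom C h \<longrightarrow>
        ccod C g = cdom C f \<longrightarrow> ccod C h = cdom C f \<longrightarrow> cmp C f g = cmp C f h \<longrightarrow> g = h)"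

definition sco :: "('o,'m) cat \<Rightarrow> (nat \<Rightarrow> 'o) \<Rightarrow> (nat \<Rightarrow> nat \<Rightarrow> 'm) \<Rightarrow> bool" where
  "sco C F \<delta> \<longleftrightarrow>
     (\<forall>n. F n \<in> Obj C)
   \<and> (\<forall>n k. 1 \<le> n \<longrightarrow> k \<le> n \<longrightarrow> \<delta> n k \<in> Hom C (F (n - 1)) (F n))
   \<and> (\<forall>n i j. 2 \<le> n \<longrightarrow> i < j \<longrightarrow> j \<le> n \<longrightarrow>
        cmp C (\<delta> n j) (\<delta> (n - 1) i) = cmp C (\<delta> n i) (\<delta> (n - 1) (j - 1)))"

definition filtration :: "('o,'m) cat \<Rightarrow> (nat \<Rightarrow> 'o) \<Rightarrow> (nat \<Rightarrow> 'm) \<Rightarrow> bool" where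
  "filtration C Fn inc \<longleftrightarrow>
     (\<forall>n. Fn n \<in> Obj C) \<and> (\<forall>n. 1 \<le> n \<longrightarrow> inc n \<in> Hom C (Fn (n - 1)) (Fn n))"

definition omega_colimit ::
  "('o,'m) cat \<Rightarrow> (nat \<Rightarrow> 'o) \<Rightarrow> (nat \<Rightarrow> 'm) \<Rightarrow> 'o \<Rightarrow> (nat \<Rightarrow> 'm) \<Rightarrow> bool" where
  "omega_colimit C Fn inc Finf \<mu> \<longleftrightarrow>
     filtration C Fn inc \<and> Finf \<in> Obj C
   \<and> (\<forall>n. \<mu> n \<in> Hom C (Fn n) Finf)
   \<and> (\<forall>n. 1 \<le> n \<longrightarrow> cmp C (\<mu> n) (inc n) = \<mu> (n - 1))
   \<and> (\<forall>X c. X \<in> Obj C \<longrightarrow> (\<forall>n. c n \<in> Hom C (Fn n) X) \<longrightarrow>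
        (\<forall>n. 1 \<le> n \<longrightarrow> cmp C (c n) (inc n) = c (n - 1)) \<longrightarrow>
        (\<exists>!u. u \<in> Hom C Finf X \<and> (\<forall>n. cmp C u (\<mu> n) = c n)))"

definition adapted ::
  "('o,'m) cat \<Rightarrow> (nat \<Rightarrow> 'o) \<Rightarrow> (nat \<Rightarrow> 'm) \<Rightarrow> 'o \<Rightarrow> (nat \<Rightarrow> 'm) \<Rightarrow> 'm \<Rightarrow> (nat \<Rightarrow> 'm) \<Rightarrow> bool" where
  "adapted C Fn inc Finf \<mu> \<alpha> a \<longleftrightarrow>
     \<alpha> \<in> Hom C Finf Finf
   \<and> (\<forall>n. 1 \<le> n \<longrightarrow> a n \<in> Hom C (Fn (n - 1)) (Fn n))
   \<and> (\<forall>n. 1 \<le> n \<longrightarrow> cmp C (\<mu> (n + 1)) (cmp C (a (n + 1)) (inc n)) = cmp C (\<mu> n) (a n))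
   \<and> (\<forall>n. 1 \<le> n \<longrightarrow> cmp C \<alpha> (\<mu> (n - 1)) = cmp C (\<mu> n) (a n))"

definition sco_system ::
  "('o,'m) cat \<Rightarrow> (nat \<Rightarrow> 'o) \<Rightarrow> (nat \<Rightarrow> 'm) \<Rightarrow> 'o \<Rightarrow> (nat \<Rightarrow> 'm) \<Rightarrow> (nat \<Rightarrow> 'm) \<Rightarrow> bool" where
  "sco_system C Fn inc Finf \<mu> \<alpha> \<longleftrightarrow>
     (\<forall>k. \<exists>a. adapted C Fn inc Finf \<mu> (\<alpha> k) a)
   \<and> (\<forall>k. 1 \<le> k \<longrightarrow> cmp C (\<alpha> k) (\<mu> (k - 1)) = \<mu> (k - 1))
   \<and> (\<forall>i j. i < j \<longrightarrow> cmp C (\<alpha> j) (\<alpha> i) = cmp C (\<alpha> i) (\<alpha> (j - 1)))"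

definition canon_a :: "(nat \<Rightarrow> nat \<Rightarrow> 'm) \<Rightarrow> nat \<Rightarrow> nat \<Rightarrow> 'm" where
  "canon_a \<delta> k n = (if k \<le> n then \<delta> n k else \<delta> n n)"

definition canon_assoc ::
  "('o,'m) cat \<Rightarrow> (nat \<Rightarrow> 'o) \<Rightarrow> (nat \<Rightarrow> nat \<Rightarrow> 'm) \<Rightarrow> (nat \<Rightarrow> 'o) \<Rightarrow> (nat \<Rightarrow> 'm) \<Rightarrow> 'o
     \<Rightarrow> (nat \<Rightarrow> 'm) \<Rightarrow> (nat \<Rightarrow> 'm) \<Rightarrow> bool" where
  "canon_assoc C F \<delta> Fn inc Finf \<mu> \<alpha> \<longleftrightarrow>
     Fn = F \<and> (\<forall>n. 1 \<le> n \<longrightarrow> inc n = \<delta> n n)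
   \<and> (\<forall>k. adapted C Fn inc Finf \<mu> (\<alpha> k) (canon_a \<delta> k))
   \<and> sco_system C Fn inc Finf \<mu> \<alpha>"

end

theory Submission
  imports Defs
begin

text \<open>
  (a) The cosimplicial identity \<open>\<delta>\<^sup>n\<^sup>+\<^sup>1 \<delta>\<^sup>k = \<delta>\<^sup>k \<delta>\<^sup>n\<close> (for \<open>k \<le> n\<close>) says that the coface
  operators commute with the filtration maps, so each family \<open>canon_a \<delta> k\<close> is compatible
  with the filtration and induces an endomorphism \<open>\<alpha> k\<close> of the colimit. The cosimplicial
  identities pass to the colimit by its uniqueness property, and \<open>\<alpha> k\<close> fixes \<open>\<mu> (k - 1)\<close>
  because at level \<open>k\<close> the coface \<open>\<delta>\<^sup>k\<close> is the filtration map itself.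
  (b) Conversely, since the \<open>\<mu> n\<close> are monic, identities between composites of the \<open>\<alpha> k\<close>
  restricted along \<open>\<mu> (n - 2)\<close> descend to the components, giving the cosimplicial identities;
  and \<open>\<alpha> k\<close> fixes every \<open>\<mu> m\<close> with \<open>m < k\<close>, which forces its component at level
  \<open>n \<le> k\<close> to be the filtration map, i.e. the components are the canonical ones.
\<close>

lemma omega_colimitD:
  assumes "omega_colimit C Fn inc Finf \<mu>"
  shows "Finf \<in> Obj C"
    and "\<mu> n \<in> Hom C (Fn n) Finf"
    and "1 \<le> n \<Longrightarrow> inc n \<in> Hom C (Fn (n - 1)) (Fn n)"
    and "1 \<le> n \<Longrightarrow> cmp C (\<mu> n) (inc n) = \<mu> (n - 1)"
  using assms unfolding omega_colimit_def filtration_def by auto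

lemma omega_colimit_universal:
  assumes "omega_colimit C Fn inc Finf \<mu>" "X \<in> Obj C"
    and "\<And>n. c n \<in> Hom C (Fn n) X"
    and "\<And>n. 1 \<le> n \<Longrightarrow> cmp C (c n) (inc n) = c (n - 1)"
  shows "\<exists>!u. u \<in> Hom C Finf X \<and> (\<forall>n. cmp C u (\<mu> n) = c n)"
  using assms unfolding omega_colimit_def by blast

lemma adaptedD:
  assumes "adapted C Fn inc Finf \<mu> \<alpha> a"
  shows "\<alpha> \<in> Hom C Finf Finf"
    and "1 \<le> n \<Longrightarrow> a n \<in> Hom C (Fn (n - 1)) (Fn n)"
    and "1 \<le> n \<Longrightarrow> cmp C \<alpha> (\<mu> (n - 1)) = cmp C (\<mu> n) (a n)"
  using assms unfolding adapted_def by auto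

lemma monic_cancel:
  "monic C f \<Longrightarrow> g \<in> Hom C a b \<Longrightarrow> h \<in> Hom C a b \<Longrightarrow> f \<in> Hom C b c \<Longrightarrow>
   cmp C f g = cmp C f h \<Longrightarrow> g = h"
  unfolding monic_def Hom_def by auto

lemma scoD:
  assumes "sco C F \<delta>"
  shows "1 \<le> n \<Longrightarrow> k \<le> n \<Longrightarrow> \<delta> n k \<in> Hom C (F (n - 1)) (F n)"
    and "2 \<le> n \<Longrightarrow> i < j \<Longrightarrow> j \<le> n \<Longrightarrow>
      cmp C (\<delta> n j) (\<delta> (n - 1) i) = cmp C (\<delta> n i) (\<delta> (n - 1) (j - 1))"
  using assms unfolding sco_def by auto

lemma canon_a_le: "k \<le> n \<Longrightarrow> canon_a \<delta> k n = \<delta> n k"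
  by (simp add: canon_a_def)

lemma canon_a_ge: "n \<le> k \<Longrightarrow> canon_a \<delta> k n = \<delta> n n"
  by (simp add: canon_a_def)

lemma canon_a_Hom:
  assumes "sco C F \<delta>" "1 \<le> n"
  shows "canon_a \<delta> k n \<in> Hom C (F (n - 1)) (F n)"
  using scoD(1)[OF assms, of k] scoD(1)[OF assms order_refl]
  by (cases "k \<le> n") (simp_all add: canon_a_le canon_a_ge)

lemma canon_a_cmp_last_coface:
  assumes "sco C F \<delta>" "1 \<le> n"
  shows "cmp C (canon_a \<delta> k (n + 1)) (\<delta> n n) = cmp C (\<delta> (n + 1) (n + 1)) (canon_a \<delta> k n)"
proof (cases "k \<le> n")
  case True
  then show ?thesis
    using scoD(2)[OF assms(1), of "n + 1" k "n + 1"] assms(2) by (simp add: canon_a_le)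
next
  case False
  then show ?thesis by (simp add: canon_a_le canon_a_ge)
qed

lemma canon_a_cosimplicial:
  assumes sco: "sco C F \<delta>" and N: "2 \<le> N" and ij: "i < j"
  shows "cmp C (canon_a \<delta> j N) (canon_a \<delta> i (N - 1))
       = cmp C (canon_a \<delta> i N) (canon_a \<delta> (j - 1) (N - 1))"
proof -
  consider "j \<le> N" | "N < j" "i < N" | "N \<le> i"
    using ij by linarith
  then show ?thesis
  proof cases
    case 1
    then show ?thesis using scoD(2)[OF sco N ij 1] ij by (simp add: canon_a_le)
  next
    case 2
    then show ?thesis
      using scoD(2)[OF sco N \<open>i < N\<close> order_refl] by (simp add: canon_a_le canon_a_ge)
  next
    case 3
    then show ?thesis using ij by (simp add: canon_a_ge)
  qed
qed

context
  fixes C :: "('o,'m) cat"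
  assumes cat: "category C"
begin

lemma Hom_cmp: "f \<in> Hom C a b \<Longrightarrow> g \<in> Hom C b c \<Longrightarrow> cmp C g f \<in> Hom C a c"
  using cat unfolding category_def by blast

lemma cmp_assoc:
  "f \<in> Hom C a b \<Longrightarrow> g \<in> Hom C b c \<Longrightarrow> h \<in> Hom C c d \<Longrightarrow>
   cmp C h (cmp C g f) = cmp C (cmp C h g) f"
  using cat unfolding category_def by blast

lemma Hom_cod_Obj: "f \<in> Hom C a b \<Longrightarrow> b \<in> Obj C"
  using cat unfolding category_def Hom_def by blast

lemma omega_colimit_ext:
  assumes col: "omega_colimit C Fn inc Finf \<mu>"
    and u: "u \<in> Hom C Finf X" and v: "v \<in> Hom C Finf X"
    and eq: "\<And>n. cmp C u (\<mu> n) = cmp C v (\<mu> n)"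
  shows "u = v"
proof -
  let ?c = "\<lambda>n. cmp C u (\<mu> n)"
  have "\<exists>!w. w \<in> Hom C Finf X \<and> (\<forall>n. cmp C w (\<mu> n) = ?c n)"
  proof (rule omega_colimit_universal[OF col Hom_cod_Obj[OF u]])
    show "?c n \<in> Hom C (Fn n) X" for n
      using Hom_cmp[OF omega_colimitD(2)[OF col] u] .
    show "cmp C (?c n) (inc n) = ?c (n - 1)" if "1 \<le> n" for n
      using cmp_assoc[OF omega_colimitD(3)[OF col that] omega_colimitD(2)[OF col] u]
        omega_colimitD(4)[OF col that] by simp
  qed
  then show ?thesis using u v eq by metis
qed

lemma adapted_exists:
  assumes col: "omega_colimit C Fn inc Finf \<mu>"
    and a: "\<And>n. 1 \<le> n \<Longrightarrow> a n \<in> Hom C (Fn (n - 1)) (Fn n)"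
    and compat: "\<And>n. 1 \<le> n \<Longrightarrow> cmp C (\<mu> (n + 1)) (cmp C (a (n + 1)) (inc n)) = cmp C (\<mu> n) (a n)"
  shows "\<exists>\<alpha>. adapted C Fn inc Finf \<mu> \<alpha> a"
proof -
  define c where "c n = cmp C (\<mu> (n + 1)) (a (n + 1))" for n
  have a': "a (n + 1) \<in> Hom C (Fn n) (Fn (n + 1))" for n
    using a[of "n + 1"] by simp
  have "\<exists>!u. u \<in> Hom C Finf Finf \<and> (\<forall>n. cmp C u (\<mu> n) = c n)"
  proof (rule omega_colimit_universal[OF col omega_colimitD(1)[OF col]])
    show "c n \<in> Hom C (Fn n) Finf" for n
      unfolding c_def using Hom_cmp[OF a' omega_colimitD(2)[OF col]] .
    show "cmp C (c n) (inc n) = c (n - 1)" if "1 \<le> n" for n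
      using cmp_assoc[OF omega_colimitD(3)[OF col that] a' omega_colimitD(2)[OF col]]
        compat[OF that] that by (simp add: c_def)
  qed
  then obtain u where u: "u \<in> Hom C Finf Finf" "\<And>n. cmp C u (\<mu> n) = c n"
    by blast
  have "adapted C Fn inc Finf \<mu> u a"
    unfolding adapted_def using u a compat by (simp add: c_def)
  then show ?thesis ..
qed

lemma adapted_eqI:
  assumes col: "omega_colimit C Fn inc Finf \<mu>" and \<alpha>: "adapted C Fn inc Finf \<mu> \<alpha> a"
    and \<beta>: "\<beta> \<in> Hom C Finf Finf"
    and eq: "\<And>n. 1 \<le> n \<Longrightarrow> cmp C \<beta> (\<mu> (n - 1)) = cmp C (\<mu> n) (a n)"
  shows "\<beta> = \<alpha>"
proof (rule omega_colimit_ext[OF col \<beta> adaptedD(1)[OF \<alpha>]])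
  show "cmp C \<beta> (\<mu> n) = cmp C \<alpha> (\<mu> n)" for n
    using eq[of "n + 1"] adaptedD(3)[OF \<alpha>, of "n + 1"] by simp
qed

lemma adapted_cmp_mu:
  assumes col: "omega_colimit C Fn inc Finf \<mu>"
    and \<alpha>: "adapted C Fn inc Finf \<mu> \<alpha> a" and \<beta>: "adapted C Fn inc Finf \<mu> \<beta> b"
  shows "cmp C (cmp C \<beta> \<alpha>) (\<mu> n) = cmp C (\<mu> (n + 2)) (cmp C (b (n + 2)) (a (n + 1)))"
proof -
  have \<mu>: "\<And>m. \<mu> m \<in> Hom C (Fn m) Finf" using omega_colimitD(2)[OF col] .
  have a: "a (n + 1) \<in> Hom C (Fn n) (Fn (n + 1))"
    and b: "b (n + 2) \<in> Hom C (Fn (n + 1)) (Fn (n + 2))"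
    using adaptedD(2)[OF \<alpha>, of "n + 1"] adaptedD(2)[OF \<beta>, of "n + 2"] by simp_all
  have "cmp C (cmp C \<beta> \<alpha>) (\<mu> n) = cmp C \<beta> (cmp C \<alpha> (\<mu> n))"
    using cmp_assoc[OF \<mu> adaptedD(1)[OF \<alpha>] adaptedD(1)[OF \<beta>]] by simp
  also have "\<dots> = cmp C \<beta> (cmp C (\<mu> (n + 1)) (a (n + 1)))"
    using adaptedD(3)[OF \<alpha>, of "n + 1"] by simp
  also have "\<dots> = cmp C (cmp C \<beta> (\<mu> (n + 1))) (a (n + 1))"
    using cmp_assoc[OF a \<mu> adaptedD(1)[OF \<beta>]] by simp
  also have "\<dots> = cmp C (cmp C (\<mu> (n + 2)) (b (n + 2))) (a (n + 1))"
    using adaptedD(3)[OF \<beta>, of "n + 2"] by simp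
  also have "\<dots> = cmp C (\<mu> (n + 2)) (cmp C (b (n + 2)) (a (n + 1)))"
    using cmp_assoc[OF a b \<mu>] by simp
  finally show ?thesis .
qed

lemma canon_adapted_exists:
  assumes sco: "sco C F \<delta>" and col: "omega_colimit C F (\<lambda>n. \<delta> n n) Finf \<mu>"
  shows "\<exists>\<alpha>. adapted C F (\<lambda>n. \<delta> n n) Finf \<mu> \<alpha> (canon_a \<delta> k)"
proof (rule adapted_exists[OF col canon_a_Hom[OF sco]])
  fix n :: nat
  assume n: "1 \<le> n"
  have last: "\<delta> (n + 1) (n + 1) \<in> Hom C (F n) (F (n + 1))"
    using scoD(1)[OF sco, of "n + 1" "n + 1"] by simp
  have "cmp C (\<mu> (n + 1)) (cmp C (canon_a \<delta> k (n + 1)) (\<delta> n n))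
      = cmp C (\<mu> (n + 1)) (cmp C (\<delta> (n + 1) (n + 1)) (canon_a \<delta> k n))"
    using canon_a_cmp_last_coface[OF sco n] by simp
  also have "\<dots> = cmp C (cmp C (\<mu> (n + 1)) (\<delta> (n + 1) (n + 1))) (canon_a \<delta> k n)"
    using cmp_assoc[OF canon_a_Hom[OF sco n] last omega_colimitD(2)[OF col]] .
  also have "\<dots> = cmp C (\<mu> n) (canon_a \<delta> k n)"
    using omega_colimitD(4)[OF col, of "n + 1"] by simp
  finally show "cmp C (\<mu> (n + 1)) (cmp C (canon_a \<delta> k (n + 1)) (\<delta> n n))
      = cmp C (\<mu> n) (canon_a \<delta> k n)" .
qed

lemma canon_sco_system:
  assumes sco: "sco C F \<delta>" and col: "omega_colimit C F (\<lambda>n. \<delta> n n) Finf \<mu>"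
    and \<alpha>: "\<And>k. adapted C F (\<lambda>n. \<delta> n n) Finf \<mu> (\<alpha> k) (canon_a \<delta> k)"
  shows "sco_system C F (\<lambda>n. \<delta> n n) Finf \<mu> \<alpha>"
  unfolding sco_system_def
proof (intro conjI allI impI)
  show "\<exists>a. adapted C F (\<lambda>n. \<delta> n n) Finf \<mu> (\<alpha> k) a" for k
    using \<alpha> by blast
  show "cmp C (\<alpha> k) (\<mu> (k - 1)) = \<mu> (k - 1)" if "1 \<le> k" for k
    using adaptedD(3)[OF \<alpha> that] omega_colimitD(4)[OF col that] by (simp add: canon_a_def)
  show "cmp C (\<alpha> j) (\<alpha> i) = cmp C (\<alpha> i) (\<alpha> (j - 1))" if "i < j" for i j
  proof (rule omega_colimit_ext[OF col])
    show "cmp C (\<alpha> j) (\<alpha> i) \<in> Hom C Finf Finf" "cmp C (\<alpha> i) (\<alpha> (j - 1)) \<in> Hom C Finf Finf"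
      using Hom_cmp adaptedD(1)[OF \<alpha>] by blast+
    show "cmp C (cmp C (\<alpha> j) (\<alpha> i)) (\<mu> n) = cmp C (cmp C (\<alpha> i) (\<alpha> (j - 1))) (\<mu> n)" for n
      using adapted_cmp_mu[OF col \<alpha> \<alpha>, where n = n] canon_a_cosimplicial[OF sco _ \<open>i < j\<close>, of "n + 2"]
      by simp
  qed
qed

lemma sco_canonical_system:
  assumes sco: "sco C F \<delta>" and col: "omega_colimit C F (\<lambda>n. \<delta> n n) Finf \<mu>"
  shows "\<exists>\<alpha>. (\<forall>k. adapted C F (\<lambda>n. \<delta> n n) Finf \<mu> (\<alpha> k) (canon_a \<delta> k)
                 \<and> (\<forall>\<beta> \<in> Hom C Finf Finf.
                      (\<forall>n. 1 \<le> n \<longrightarrow> cmp C \<beta> (\<mu> (n - 1)) = cmp C (\<mu> n) (canon_a \<delta> k n))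
                      \<longrightarrow> \<beta> = \<alpha> k))
             \<and> sco_system C F (\<lambda>n. \<delta> n n) Finf \<mu> \<alpha>
             \<and> canon_assoc C F \<delta> F (\<lambda>n. \<delta> n n) Finf \<mu> \<alpha>"
proof -
  obtain \<alpha> where \<alpha>: "\<And>k. adapted C F (\<lambda>n. \<delta> n n) Finf \<mu> (\<alpha> k) (canon_a \<delta> k)"
    using canon_adapted_exists[OF sco col] by metis
  have "sco_system C F (\<lambda>n. \<delta> n n) Finf \<mu> \<alpha>"
    using canon_sco_system[OF sco col \<alpha>] .
  moreover have "\<beta> = \<alpha> k"
    if "\<beta> \<in> Hom C Finf Finf"
      "\<forall>n. 1 \<le> n \<longrightarrow> cmp C \<beta> (\<mu> (n - 1)) = cmp C (\<mu> n) (canon_a \<delta> k n)" for \<beta> k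
    using adapted_eqI[OF col \<alpha> that(1)] that(2) by blast
  ultimately show ?thesis
    using \<alpha> unfolding canon_assoc_def by blast
qed

lemma sco_system_fixes_lower:
  assumes col: "omega_colimit C Fn inc Finf \<mu>" and ss: "sco_system C Fn inc Finf \<mu> \<alpha>"
    and "m < k"
  shows "cmp C (\<alpha> k) (\<mu> m) = \<mu> m"
proof -
  have "m \<le> k - 1" using \<open>m < k\<close> by simp
  then show ?thesis
  proof (induction m rule: inc_induct)
    case base
    then show ?case using ss \<open>m < k\<close> unfolding sco_system_def by force
  next
    case (step m)
    have \<alpha>: "\<alpha> k \<in> Hom C Finf Finf"
      using ss unfolding sco_system_def by (blast dest: adaptedD(1))
    have inc: "inc (Suc m) \<in> Hom C (Fn m) (Fn (Suc m))"
      using omega_colimitD(3)[OF col, of "Suc m"] by simp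
    have "cmp C (\<alpha> k) (\<mu> m) = cmp C (\<alpha> k) (cmp C (\<mu> (Suc m)) (inc (Suc m)))"
      using omega_colimitD(4)[OF col, of "Suc m"] by simp
    also have "\<dots> = cmp C (cmp C (\<alpha> k) (\<mu> (Suc m))) (inc (Suc m))"
      using cmp_assoc[OF inc omega_colimitD(2)[OF col] \<alpha>] .
    also have "\<dots> = \<mu> m"
      using step.IH omega_colimitD(4)[OF col, of "Suc m"] by simp
    finally show ?case .
  qed
qed

lemma sco_system_component_eq_inc:
  assumes col: "omega_colimit C Fn inc Finf \<mu>" and mono: "monic C (\<mu> n)"
    and ss: "sco_system C Fn inc Finf \<mu> \<alpha>" and \<alpha>: "adapted C Fn inc Finf \<mu> (\<alpha> k) a"
    and n: "1 \<le> n" "n \<le> k"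
  shows "a n = inc n"
proof (rule monic_cancel[OF mono adaptedD(2)[OF \<alpha> n(1)] omega_colimitD(3)[OF col n(1)]
      omega_colimitD(2)[OF col]])
  have "cmp C (\<mu> n) (a n) = cmp C (\<alpha> k) (\<mu> (n - 1))"
    using adaptedD(3)[OF \<alpha> n(1)] by simp
  also have "\<dots> = \<mu> (n - 1)"
    using sco_system_fixes_lower[OF col ss] n by simp
  also have "\<dots> = cmp C (\<mu> n) (inc n)"
    using omega_colimitD(4)[OF col n(1)] by simp
  finally show "cmp C (\<mu> n) (a n) = cmp C (\<mu> n) (inc n)" .
qed

lemma sco_system_components_sco:
  assumes col: "omega_colimit C Fn inc Finf \<mu>" and mono: "\<And>n. monic C (\<mu> n)"
    and \<alpha>: "\<And>k. adapted C Fn inc Finf \<mu> (\<alpha> k) (a k)"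
    and ss: "sco_system C Fn inc Finf \<mu> \<alpha>"
  shows "sco C Fn (\<lambda>n k. a k n)"
  unfolding sco_def
proof (intro conjI allI impI)
  show "Fn n \<in> Obj C" for n
    using col unfolding omega_colimit_def filtration_def by blast
  show "a k n \<in> Hom C (Fn (n - 1)) (Fn n)" if "1 \<le> n" for n k
    using adaptedD(2)[OF \<alpha> that] .
  fix n i j :: nat
  assume n: "2 \<le> n" and ij: "i < j" and "j \<le> n"
  have faces: "cmp C (a p n) (a q (n - 1)) \<in> Hom C (Fn (n - 2)) (Fn n)" for p q
    using Hom_cmp[OF adaptedD(2)[OF \<alpha>, of "n - 1"] adaptedD(2)[OF \<alpha>, of n]] n
    by (simp add: numeral_2_eq_2)
  have lift: "cmp C (\<mu> n) (cmp C (a p n) (a q (n - 1))) = cmp C (cmp C (\<alpha> p) (\<alpha> q)) (\<mu> (n - 2))"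
    for p q
  proof -
    have "n - 2 + 2 = n" "n - 2 + 1 = n - 1" using n by simp_all
    then show ?thesis using adapted_cmp_mu[OF col \<alpha> \<alpha>, where n = "n - 2"] by metis
  qed
  have "cmp C (\<alpha> j) (\<alpha> i) = cmp C (\<alpha> i) (\<alpha> (j - 1))"
    using ss ij unfolding sco_system_def by blast
  then show "cmp C (a j n) (a i (n - 1)) = cmp C (a i n) (a (j - 1) (n - 1))"
    using monic_cancel[OF mono faces faces omega_colimitD(2)[OF col]] lift by metis
qed

lemma sco_system_canon_assoc:
  assumes col: "omega_colimit C Fn inc Finf \<mu>" and mono: "\<And>n. monic C (\<mu> n)"
    and \<alpha>: "\<And>k. adapted C Fn inc Finf \<mu> (\<alpha> k) (a k)"
    and ss: "sco_system C Fn inc Finf \<mu> \<alpha>"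
  shows "canon_assoc C Fn (\<lambda>n k. a k n) Fn inc Finf \<mu> \<alpha>"
proof -
  have inc: "a k n = inc n" if "1 \<le> n" "n \<le> k" for k n
    using sco_system_component_eq_inc[OF col mono ss \<alpha> that] .
  have "canon_a (\<lambda>n k. a k n) k n = a k n" if "1 \<le> n" for k n
    using inc[OF that] inc[OF that order_refl] by (simp add: canon_a_def)
  then have "adapted C Fn inc Finf \<mu> (\<alpha> k) (canon_a (\<lambda>n k. a k n) k)" for k
    using \<alpha>[of k] unfolding adapted_def by simp
  then show ?thesis
    unfolding canon_assoc_def using inc ss by simp
qed

end

theorem mainTheorem3:
  fixes C :: "('o,'m) cat"
  assumes "category C"
  shows "(\<forall>(F :: nat \<Rightarrow> 'o) \<delta> Finf \<mu>.
           sco C F \<delta> \<and> omega_colimit C F (\<lambda>n. \<delta> n n) Finf \<mu> \<longrightarrow>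
           (\<exists>\<alpha>. (\<forall>k. adapted C F (\<lambda>n. \<delta> n n) Finf \<mu> (\<alpha> k) (canon_a \<delta> k)
                     \<and> (\<forall>\<beta> \<in> Hom C Finf Finf.
                          (\<forall>n. 1 \<le> n \<longrightarrow> cmp C \<beta> (\<mu> (n - 1)) = cmp C (\<mu> n) (canon_a \<delta> k n))
                          \<longrightarrow> \<beta> = \<alpha> k))
                 \<and> sco_system C F (\<lambda>n. \<delta> n n) Finf \<mu> \<alpha>
                 \<and> canon_assoc C F \<delta> F (\<lambda>n. \<delta> n n) Finf \<mu> \<alpha>))
       \<and> (\<forall>(Fn :: nat \<Rightarrow> 'o) inc Finf \<mu> \<alpha> a.
           omega_colimit C Fn inc Finf \<mu> \<and> (\<forall>n. monic C (\<mu> n))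
           \<and> (\<forall>k. adapted C Fn inc Finf \<mu> (\<alpha> k) (a k))
           \<and> sco_system C Fn inc Finf \<mu> \<alpha> \<longrightarrow>
           sco C Fn (\<lambda>n k. a k n) \<and> canon_assoc C Fn (\<lambda>n k. a k n) Fn inc Finf \<mu> \<alpha>)"
  using sco_canonical_system[OF assms] sco_system_components_sco[OF assms]
    sco_system_canon_assoc[OF assms]
  by blast

end
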